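(* Suppose that for every $x\in\mathcal{X}$ and $N\in\mathbb{N}^+$, $W_{x,N}=\frac1N\sum_{k=1}^N W_x^{(k)}$ where $W_x^{(1)},\dots,W_x^{(N)}$ are i.i.d. with law $Q_x$ on $(0,\infty)$ and $\mathbb{E}_{Q_x}[W_x]=1$ for $W_x\sim Q_x$; let $Q_{x,N}$ be the law of $W_{x,N}$. Consider the conditions: (W1) for every $\delta>0$, $\lim_{N\to\infty}\sup_{x\in\mathcal{X}}\mathbb{P}_{Q_{x,N}}[|W_{x,N}-1|\ge\delta]=0$; (W2) $\lim_{N\to\infty}\sup_{x\in\mathcal{X}}\mathbb{E}_{Q_{x,N}}[W_{x,N}^{-1}]=1$; (W3) $\lim_{K\to\infty}\sup_{x\in\mathcal{X}}\mathbb{E}_{Q_x}[W_x\mathbb{1}_{\{W_x>K\}}]=0$; (W4) there exist $\gamma\in(0,1)$ and constants $M<\infty$, $\beta>0$ such that $\sup_{x\in\mathcal{X}}\mathbb{P}_{Q_x}[W_x\le w]\le Mw^\beta$ for all $w\in(0,\gamma)$. Then (i) (W3) implies (W1); (ii) (W1) and (W4) together imply (W2). *)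

theory Defs
  imports "HOL-Probability.Probability"
begin

definition mean_law :: "real measure \<Rightarrow> nat \<Rightarrow> real measure" where
  "mean_law Q N = distr (PiM {1..N} (\<lambda>k. Q)) borel (\<lambda>\<omega>. (\<Sum>k\<in>{1..N}. \<omega> k) / real N)"

definition W1 :: "('x \<Rightarrow> real measure) \<Rightarrow> bool" where
  "W1 Q \<longleftrightarrow> (\<forall>\<delta>>0. (\<lambda>N. SUP x. emeasure (mean_law (Q x) N) {w. \<bar>w - 1\<bar> \<ge> \<delta>})
                      \<longlonglongrightarrow> 0)"

definition W2 :: "('x \<Rightarrow> real measure) \<Rightarrow> bool" where
  "W2 Q \<longleftrightarrow> (\<lambda>N. SUP x. \<integral>\<^sup>+ w. ennreal (1 / w) \<partial>(mean_law (Q x) N)) \<longlonglongrightarrow> 1"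

definition W3 :: "('x \<Rightarrow> real measure) \<Rightarrow> bool" where
  "W3 Q \<longleftrightarrow> ((\<lambda>K::real. SUP x. \<integral>\<^sup>+ w. ennreal (w * indicator {K<..} w) \<partial>(Q x))
              \<longlongrightarrow> 0) at_top"

definition W4 :: "('x \<Rightarrow> real measure) \<Rightarrow> bool" where
  "W4 Q \<longleftrightarrow> (\<exists>\<gamma>::real. 0 < \<gamma> \<and> \<gamma> < 1 \<and> (\<exists>(M::real) (\<beta>::real). \<beta> > 0 \<and>
      (\<forall>w. 0 < w \<and> w < \<gamma> \<longrightarrow> (SUP x. emeasure (Q x) {..w}) \<le> ennreal (M * w powr \<beta>))))"

end

(*
  (i) Truncate every summand at a level K. The truncated part has variance at most K\<^sup>2, so
  Chebyshev bounds its deviation by O(K\<^sup>2/N); by (W3) the remainder has uniformly small L\<^sup>1 norm,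
  which also keeps the mean of the truncated part close to 1.

  (ii) On {|W - 1| < \<delta>} the integrand 1/W lies between 1/(1+\<delta>) and 1/(1-\<delta>), and (W1) makes
  the complement uniformly negligible, except where W is close to 0. For W < w0, AM-GM and
  exponential tilting give 1/W \<le> \<Prod>k W\<^sub>k powr (-1/N) * exp (t (w0 - W\<^sub>k)), whose expectation is
  the N-th power of E[W powr (-1/N) * exp (t (w0 - W))]. Splitting (0, \<epsilon>] into dyadic shells,
  (W4) makes this factor at most 1/2 uniformly in x for suitable t, w0 and all large N.
*)

theory Submission
  imports Defs
begin

lemma nn_integral_iid_prod:
  fixes f :: "'i \<Rightarrow> 'a \<Rightarrow> ennreal"
  assumes "sigma_finite_measure Q" "finite I" "\<And>i. i \<in> I \<Longrightarrow> f i \<in> borel_measurable Q"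
  shows "(\<integral>\<^sup>+\<omega>. (\<Prod>i\<in>I. f i (\<omega> i)) \<partial>PiM I (\<lambda>_. Q)) = (\<Prod>i\<in>I. \<integral>\<^sup>+w. f i w \<partial>Q)"
proof -
  interpret product_sigma_finite "\<lambda>_::'i. Q"
    using assms(1) by (simp add: product_sigma_finite_def)
  show ?thesis using assms(2,3) by (rule product_nn_integral_prod)
qed

lemma
  fixes f :: "'i \<Rightarrow> 'a \<Rightarrow> real"
  assumes Q: "prob_space Q" and I: "finite I" "J \<subseteq> I" and f: "\<And>j. j \<in> J \<Longrightarrow> integrable Q (f j)"
  shows integral_iid_prod_subset:
      "(\<integral>\<omega>. (\<Prod>j\<in>J. f j (\<omega> j)) \<partial>PiM I (\<lambda>_. Q)) = (\<Prod>j\<in>J. \<integral>w. f j w \<partial>Q)"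
    and integrable_iid_prod_subset:
      "integrable (PiM I (\<lambda>_. Q)) (\<lambda>\<omega>. \<Prod>j\<in>J. f j (\<omega> j))"
proof -
  interpret prob_space Q by fact
  interpret product_sigma_finite "\<lambda>_::'i. Q"
    by (simp add: product_sigma_finite_def sigma_finite_measure_axioms)
  define g where "g i = (if i \<in> J then f i else (\<lambda>_. 1))" for i
  have g: "integrable Q (g i)" for i using f by (simp add: g_def)
  have "finite J" using I finite_subset by blast
  have prod_g: "(\<Prod>i\<in>I. g i (\<omega> i)) = (\<Prod>j\<in>J. f j (\<omega> j))" for \<omega>
    using I \<open>finite J\<close> by (intro prod.mono_neutral_cong_right) (auto simp: g_def)
  have prod_integral_g: "(\<Prod>i\<in>I. \<integral>w. g i w \<partial>Q) = (\<Prod>j\<in>J. \<integral>w. f j w \<partial>Q)"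
    using I \<open>finite J\<close> by (intro prod.mono_neutral_cong_right) (auto simp: g_def prob_space)
  show "(\<integral>\<omega>. (\<Prod>j\<in>J. f j (\<omega> j)) \<partial>PiM I (\<lambda>_. Q)) = (\<Prod>j\<in>J. \<integral>w. f j w \<partial>Q)"
    using product_integral_prod[OF I(1), of g] g by (simp add: prod_g prod_integral_g)
  show "integrable (PiM I (\<lambda>_. Q)) (\<lambda>\<omega>. \<Prod>j\<in>J. f j (\<omega> j))"
    using product_integrable_prod[OF I(1), of g] g by (simp add: prod_g)
qed

lemma
  fixes g :: "'a \<Rightarrow> real"
  assumes "prob_space Q" "finite I" "k \<in> I" "integrable Q g"
  shows integral_iid_coordinate: "(\<integral>\<omega>. g (\<omega> k) \<partial>PiM I (\<lambda>_. Q)) = (\<integral>w. g w \<partial>Q)"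
    and integrable_iid_coordinate: "integrable (PiM I (\<lambda>_. Q)) (\<lambda>\<omega>. g (\<omega> k))"
  using integral_iid_prod_subset[of Q I "{k}" "\<lambda>_. g"] integrable_iid_prod_subset[of Q I "{k}" "\<lambda>_. g"] assms
  by simp_all

lemma
  fixes h :: "'a \<Rightarrow> real"
  assumes Q: "prob_space Q" and I: "finite I"
    and h: "integrable Q h" "integrable Q (\<lambda>w. (h w)\<^sup>2)" and centered: "(\<integral>w. h w \<partial>Q) = 0"
  shows integral_iid_sum_square:
      "(\<integral>\<omega>. (\<Sum>i\<in>I. h (\<omega> i))\<^sup>2 \<partial>PiM I (\<lambda>_. Q)) = card I * (\<integral>w. (h w)\<^sup>2 \<partial>Q)"
    and integrable_iid_sum_square:
      "integrable (PiM I (\<lambda>_. Q)) (\<lambda>\<omega>. (\<Sum>i\<in>I. h (\<omega> i))\<^sup>2)"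
proof -
  define P where "P = PiM I (\<lambda>_. Q)"
  define V where "V = (\<integral>w. (h w)\<^sup>2 \<partial>Q)"
  have cross: "integrable P (\<lambda>\<omega>. h (\<omega> i) * h (\<omega> j))
      \<and> (\<integral>\<omega>. h (\<omega> i) * h (\<omega> j) \<partial>P) = (if i = j then V else 0)" if "i \<in> I" "j \<in> I" for i j
  proof (cases "i = j")
    case True
    then show ?thesis
      using integral_iid_coordinate[OF Q I that(1) h(2)] integrable_iid_coordinate[OF Q I that(1) h(2)]
      by (simp add: P_def V_def power2_eq_square)
  next
    case False
    then show ?thesis
      using integral_iid_prod_subset[OF Q I, of "{i, j}" "\<lambda>_. h"]
        integrable_iid_prod_subset[OF Q I, of "{i, j}" "\<lambda>_. h"] that h(1)
      by (simp add: P_def centered)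
  qed
  have square_eq: "(\<Sum>i\<in>I. h (\<omega> i))\<^sup>2 = (\<Sum>i\<in>I. \<Sum>j\<in>I. h (\<omega> i) * h (\<omega> j))" for \<omega>
    by (simp add: power2_eq_square sum_product)
  show "integrable (PiM I (\<lambda>_. Q)) (\<lambda>\<omega>. (\<Sum>i\<in>I. h (\<omega> i))\<^sup>2)"
    using cross by (simp add: square_eq P_def)
  have "(\<integral>\<omega>. (\<Sum>i\<in>I. h (\<omega> i))\<^sup>2 \<partial>P) = (\<Sum>i\<in>I. \<Sum>j\<in>I. \<integral>\<omega>. h (\<omega> i) * h (\<omega> j) \<partial>P)"
    using cross by (simp add: square_eq integral_sum integrable_sum)
  also have "\<dots> = (\<Sum>i\<in>I. \<Sum>j\<in>I. if i = j then V else 0)"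
    using cross by (intro sum.cong) auto
  finally show "(\<integral>\<omega>. (\<Sum>i\<in>I. h (\<omega> i))\<^sup>2 \<partial>PiM I (\<lambda>_. Q)) = card I * (\<integral>w. (h w)\<^sup>2 \<partial>Q)"
    using I by (simp add: P_def V_def)
qed

definition sample_mean :: "nat \<Rightarrow> (nat \<Rightarrow> real) \<Rightarrow> real" where
  "sample_mean N \<omega> = (\<Sum>k\<in>{1..N}. \<omega> k) / real N"

lemma mean_law_eq_distr: "mean_law Q N = distr (PiM {1..N} (\<lambda>_. Q)) borel (sample_mean N)"
  by (simp add: mean_law_def sample_mean_def[abs_def])

lemma sets_mean_law [simp]: "sets (mean_law Q N) = sets borel"
  by (simp add: mean_law_def)

lemma measurable_sample_mean:
  assumes "sets Q = sets borel"
  shows "sample_mean N \<in> borel_measurable (PiM {1..N} (\<lambda>_. Q))"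
proof -
  have sets_eq: "sets (PiM {1..N} (\<lambda>_. Q)) = sets (PiM {1..N} (\<lambda>_. borel :: real measure))"
    using assms by (intro sets_PiM_cong) auto
  show ?thesis
    unfolding measurable_cong_sets[OF sets_eq refl] sample_mean_def[abs_def] by measurable
qed

lemma prob_space_mean_law:
  assumes "prob_space Q" "sets Q = sets borel"
  shows "prob_space (mean_law Q N)"
  unfolding mean_law_eq_distr
  by (intro prob_space.prob_space_distr prob_space_PiM measurable_sample_mean) (use assms in auto)

lemma integral_abs_truncation_le:
  fixes Q :: "real measure" and K :: real
  assumes pos: "AE w in Q. 0 < w" and int: "integrable Q (\<lambda>w. w)"
  shows "ennreal (\<integral>w. \<bar>w - max 0 (min w K)\<bar> \<partial>Q) \<le> (\<integral>\<^sup>+w. ennreal (w * indicator {K<..} w) \<partial>Q)"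
proof -
  have "integrable Q (\<lambda>w. \<bar>w - max 0 (min w K)\<bar>)"
    using int by (rule Bochner_Integration.integrable_bound)
      (use borel_measurable_integrable[OF int] in \<open>auto intro!: AE_I2 simp: max_def min_def\<close>)
  then have "ennreal (\<integral>w. \<bar>w - max 0 (min w K)\<bar> \<partial>Q) = (\<integral>\<^sup>+w. ennreal \<bar>w - max 0 (min w K)\<bar> \<partial>Q)"
    by (intro nn_integral_eq_integral[symmetric]) auto
  also have "\<dots> \<le> (\<integral>\<^sup>+w. ennreal (w * indicator {K<..} w) \<partial>Q)"
    using pos by (intro nn_integral_mono_AE) (auto elim!: eventually_mono simp: indicator_def)
  finally show ?thesis .
qed

lemma one_le_deviation_split:
  fixes a b c \<delta> :: real
  assumes "0 < \<delta>" "\<bar>c\<bar> \<le> \<delta>/3" "\<delta> \<le> \<bar>a + b + c\<bar>"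
  shows "1 \<le> 9/\<delta>\<^sup>2 * a\<^sup>2 + 3/\<delta> * \<bar>b\<bar>"
proof (cases "\<bar>a\<bar> \<ge> \<delta>/3")
  case True
  then have "(\<delta>/3)\<^sup>2 \<le> a\<^sup>2"
    using assms(1) by (metis abs_le_square_iff abs_of_pos divide_pos_pos zero_less_numeral)
  then have "1 \<le> 9/\<delta>\<^sup>2 * a\<^sup>2" using assms(1) by (simp add: field_simps power2_eq_square)
  then show ?thesis using assms(1) by (smt (verit) divide_nonneg_nonneg mult_nonneg_nonneg abs_ge_zero)
next
  case False
  then have "\<bar>b\<bar> \<ge> \<delta>/3" using assms by linarith
  then have "1 \<le> 3/\<delta> * \<bar>b\<bar>" using assms(1) by (simp add: field_simps)
  then show ?thesis by (smt (verit) divide_nonneg_nonneg mult_nonneg_nonneg zero_le_power2)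
qed

lemma emeasure_mean_law_le_integral:
  fixes Q :: "real measure" and G :: "(nat \<Rightarrow> real) \<Rightarrow> real"
  assumes sets_Q: "sets Q = sets borel" and A: "A \<in> sets borel"
    and int_G: "integrable (PiM {1..N} (\<lambda>_. Q)) G" and G_nonneg: "\<And>\<omega>. 0 \<le> G \<omega>"
    and G_ge: "\<And>\<omega>. sample_mean N \<omega> \<in> A \<Longrightarrow> 1 \<le> G \<omega>"
  shows "emeasure (mean_law Q N) A \<le> ennreal (\<integral>\<omega>. G \<omega> \<partial>PiM {1..N} (\<lambda>_. Q))"
proof -
  define P where "P = PiM {1..N} (\<lambda>_. Q)"
  have mean_meas: "sample_mean N \<in> borel_measurable P"
    unfolding P_def by (rule measurable_sample_mean[OF sets_Q])
  have "emeasure (mean_law Q N) A = emeasure P (sample_mean N -` A \<inter> space P)"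
    unfolding mean_law_eq_distr P_def[symmetric] using mean_meas A by (rule emeasure_distr)
  also have "\<dots> = (\<integral>\<^sup>+\<omega>. indicator (sample_mean N -` A \<inter> space P) \<omega> \<partial>P)"
    using mean_meas A by (intro nn_integral_indicator[symmetric] measurable_sets)
  also have "\<dots> \<le> (\<integral>\<^sup>+\<omega>. ennreal (G \<omega>) \<partial>P)"
    using G_ge by (intro nn_integral_mono) (simp add: indicator_def)
  also have "\<dots> = ennreal (\<integral>\<omega>. G \<omega> \<partial>P)"
    using int_G G_nonneg by (intro nn_integral_eq_integral) (auto simp: P_def)
  finally show ?thesis unfolding P_def .
qed

lemma
  fixes Y :: "'a \<Rightarrow> real" and K :: real
  assumes Q: "prob_space Q" and I: "finite I" and Y_meas: "Y \<in> borel_measurable Q"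
    and Y: "\<And>w. 0 \<le> Y w" "\<And>w. Y w \<le> K"
  shows integral_centered_iid_sum_square_le:
      "(\<integral>\<omega>. (\<Sum>i\<in>I. Y (\<omega> i) - (\<integral>w. Y w \<partial>Q))\<^sup>2 \<partial>PiM I (\<lambda>_. Q)) \<le> card I * K\<^sup>2"
    and integrable_centered_iid_sum_square:
      "integrable (PiM I (\<lambda>_. Q)) (\<lambda>\<omega>. (\<Sum>i\<in>I. Y (\<omega> i) - (\<integral>w. Y w \<partial>Q))\<^sup>2)"
proof -
  interpret prob_space Q by fact
  define m where "m = (\<integral>w. Y w \<partial>Q)"
  have K: "0 \<le> K" using Y order_trans by blast
  have int_Y: "integrable Q Y"
    using Y K Y_meas by (intro integrable_const_bound[where B=K] AE_I2) auto
  have "0 \<le> m" "m \<le> K"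
    using integral_mono[OF integrable_const int_Y, of 0] integral_mono[OF int_Y integrable_const, of K] Y
    by (auto simp: m_def prob_space)
  then have centered_sq_le: "(Y w - m)\<^sup>2 \<le> K\<^sup>2" for w
    using Y[of w] K by (simp add: abs_le_square_iff[symmetric])
  have int_centered: "integrable Q (\<lambda>w. Y w - m)" "integrable Q (\<lambda>w. (Y w - m)\<^sup>2)"
    using int_Y Y_meas centered_sq_le by (auto intro!: integrable_const_bound[where B="K\<^sup>2"] AE_I2)
  have mean_zero: "(\<integral>w. Y w - m \<partial>Q) = 0" using int_Y by (simp add: m_def prob_space)
  have "(\<integral>w. (Y w - m)\<^sup>2 \<partial>Q) \<le> (\<integral>w. K\<^sup>2 \<partial>Q)"
    using int_centered(2) centered_sq_le by (intro integral_mono) auto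
  then show "(\<integral>\<omega>. (\<Sum>i\<in>I. Y (\<omega> i) - (\<integral>w. Y w \<partial>Q))\<^sup>2 \<partial>PiM I (\<lambda>_. Q)) \<le> card I * K\<^sup>2"
    unfolding m_def[symmetric] integral_iid_sum_square[OF Q I int_centered mean_zero]
    by (simp add: prob_space mult_left_mono)
  show "integrable (PiM I (\<lambda>_. Q)) (\<lambda>\<omega>. (\<Sum>i\<in>I. Y (\<omega> i) - (\<integral>w. Y w \<partial>Q))\<^sup>2)"
    unfolding m_def[symmetric] by (rule integrable_iid_sum_square[OF Q I int_centered mean_zero])
qed

lemma mean_law_deviation_le:
  fixes Q :: "real measure" and N :: nat and K \<delta> e :: real
  assumes Q: "prob_space Q" and sets_Q: "sets Q = sets borel" and pos: "AE w in Q. 0 < w"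
    and int: "integrable Q (\<lambda>w. w)" and mean1: "(\<integral>w. w \<partial>Q) = 1"
    and \<delta>: "\<delta> > 0" and K: "K \<ge> 0" and N: "N \<ge> 1"
    and tail: "(\<integral>\<^sup>+w. ennreal (w * indicator {K<..} w) \<partial>Q) \<le> ennreal e" and e: "0 \<le> e" "e \<le> \<delta>/3"
  shows "emeasure (mean_law Q N) {w. \<delta> \<le> \<bar>w - 1\<bar>} \<le> ennreal (9*K\<^sup>2/(N*\<delta>\<^sup>2) + 3*e/\<delta>)"
proof -
  interpret prob_space Q by fact
  define I where "I = {1..N}"
  have I: "finite I" "card I = N" by (auto simp: I_def)
  define P where "P = PiM I (\<lambda>_. Q)"
  define Y where "Y w = max 0 (min w K)" for w :: real
  define D where "D w = w - Y w" for w
  define m where "m = (\<integral>w. Y w \<partial>Q)"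
  have Y: "0 \<le> Y w" "Y w \<le> K" for w using K by (auto simp: Y_def)
  have Y_meas: "Y \<in> borel_measurable Q"
    unfolding measurable_cong_sets[OF sets_Q refl] Y_def by measurable
  have int_Y: "integrable Q Y"
    using Y K Y_meas by (intro integrable_const_bound[where B=K] AE_I2) auto
  have int_abs_D: "integrable Q (\<lambda>w. \<bar>D w\<bar>)" using int int_Y by (auto simp: D_def)
  have abs_D: "(\<integral>w. \<bar>D w\<bar> \<partial>Q) \<le> e"
    using order_trans[OF integral_abs_truncation_le[OF pos int, of K] tail] e
    by (simp add: D_def Y_def ennreal_le_iff)
  have "\<bar>m - 1\<bar> = \<bar>\<integral>w. D w \<partial>Q\<bar>"
    using int int_Y by (simp add: D_def m_def mean1[symmetric] Bochner_Integration.integral_diff)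
  also have "\<dots> \<le> e" using abs_D integral_abs_bound[of Q D] by linarith
  finally have m_near_1: "\<bar>m - 1\<bar> \<le> \<delta>/3" using e by linarith
  note second_moment = integral_centered_iid_sum_square_le[OF Q I(1) Y_meas Y, folded m_def P_def]
    integrable_centered_iid_sum_square[OF Q I(1) Y_meas Y, folded m_def P_def]
  have first_moment: "(\<integral>\<omega>. (\<Sum>k\<in>I. \<bar>D (\<omega> k)\<bar>) \<partial>P) = N * (\<integral>w. \<bar>D w\<bar> \<partial>Q)"
    "integrable P (\<lambda>\<omega>. \<Sum>k\<in>I. \<bar>D (\<omega> k)\<bar>)"
    using integral_iid_coordinate[OF Q I(1) _ int_abs_D] integrable_iid_coordinate[OF Q I(1) _ int_abs_D] I
    by (simp_all add: P_def integral_sum)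
  \<comment> \<open>\<open>G\<close> dominates the indicator of a deviation: Chebyshev for the truncated part \<open>Y\<close>,
    Markov for the remainder \<open>D\<close>.\<close>
  define G where
    "G \<omega> = 9/\<delta>\<^sup>2 * ((\<Sum>k\<in>I. Y (\<omega> k) - m) / N)\<^sup>2 + 3/\<delta> * ((\<Sum>k\<in>I. \<bar>D (\<omega> k)\<bar>) / N)" for \<omega>
  have int_G: "integrable P G"
    unfolding G_def power_divide using second_moment(2) first_moment(2)
    by (intro Bochner_Integration.integrable_add integrable_mult_right integrable_divide)
  have G_nonneg: "0 \<le> G \<omega>" for \<omega> using \<delta> by (simp add: G_def sum_nonneg)
  have "(\<integral>\<omega>. G \<omega> \<partial>P)
      = 9/\<delta>\<^sup>2 * ((\<integral>\<omega>. (\<Sum>k\<in>I. Y (\<omega> k) - m)\<^sup>2 \<partial>P) / N\<^sup>2) + 3/\<delta> * (N * (\<integral>w. \<bar>D w\<bar> \<partial>Q) / N)"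
    using second_moment(2) first_moment by (simp add: G_def power_divide)
  also have "\<dots> \<le> 9/\<delta>\<^sup>2 * (N * K\<^sup>2 / N\<^sup>2) + 3/\<delta> * (N * e / N)"
    using second_moment(1) abs_D \<delta> I by (intro add_mono mult_left_mono divide_right_mono) auto
  also have "\<dots> = 9*K\<^sup>2/(N*\<delta>\<^sup>2) + 3*e/\<delta>" using N by (simp add: field_simps power2_eq_square)
  finally have integral_G: "(\<integral>\<omega>. G \<omega> \<partial>P) \<le> 9*K\<^sup>2/(N*\<delta>\<^sup>2) + 3*e/\<delta>" .
  have deviation_le_G: "1 \<le> G \<omega>" if "sample_mean N \<omega> \<in> {w. \<delta> \<le> \<bar>w - 1\<bar>}" for \<omega>
  proof -
    have "sample_mean N \<omega> - 1 = (\<Sum>k\<in>I. Y (\<omega> k) - m) / N + (\<Sum>k\<in>I. D (\<omega> k)) / N + (m - 1)"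
      using N I unfolding sample_mean_def I_def[symmetric] by (simp add: D_def sum_subtractf field_simps)
    then have "1 \<le> 9/\<delta>\<^sup>2 * ((\<Sum>k\<in>I. Y (\<omega> k) - m) / N)\<^sup>2 + 3/\<delta> * \<bar>(\<Sum>k\<in>I. D (\<omega> k)) / N\<bar>"
      using that by (intro one_le_deviation_split[OF \<delta> m_near_1]) simp
    moreover have "\<bar>(\<Sum>k\<in>I. D (\<omega> k)) / N\<bar> \<le> (\<Sum>k\<in>I. \<bar>D (\<omega> k)\<bar>) / N"
      by (simp add: divide_right_mono sum_abs)
    ultimately show ?thesis using \<delta> unfolding G_def by (smt (verit) mult_left_mono divide_nonneg_nonneg)
  qed
  have "emeasure (mean_law Q N) {w. \<delta> \<le> \<bar>w - 1\<bar>} \<le> ennreal (\<integral>\<omega>. G \<omega> \<partial>P)"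
    using int_G G_nonneg deviation_le_G unfolding P_def I_def
    by (intro emeasure_mean_law_le_integral[OF sets_Q]) auto
  also have "\<dots> \<le> ennreal (9*K\<^sup>2/(N*\<delta>\<^sup>2) + 3*e/\<delta>)" using integral_G by (rule ennreal_leI)
  finally show ?thesis .
qed

lemma W3_imp_W1:
  fixes Q :: "'x \<Rightarrow> real measure"
  assumes prob: "\<And>x. prob_space (Q x)" and sets: "\<And>x. sets (Q x) = sets borel"
    and pos: "\<And>x. AE w in Q x. 0 < w" and int: "\<And>x. integrable (Q x) (\<lambda>w. w)"
    and mean1: "\<And>x. (\<integral>w. w \<partial>Q x) = 1" and W3: "W3 Q"
  shows "W1 Q"
  unfolding W1_def
proof (intro allI impI tendsto_zero_ennreal)
  fix \<delta> r :: real
  assume \<delta>: "\<delta> > 0" and r: "0 < r"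
  define e where "e = min (\<delta>/3) (r*\<delta>/6)"
  have e: "0 < e" "e \<le> \<delta>/3" "3*e/\<delta> \<le> r/2" using \<delta> r by (auto simp: e_def field_simps)
  have "eventually (\<lambda>K. (SUP x. \<integral>\<^sup>+w. ennreal (w * indicator {K<..} w) \<partial>Q x) < ennreal e \<and> 0 \<le> K) at_top"
    using W3 e(1) unfolding W3_def by (intro eventually_conj order_tendstoD(2) eventually_ge_at_top) auto
  then obtain K where K: "0 \<le> K"
    and sup_tail: "(SUP x. \<integral>\<^sup>+w. ennreal (w * indicator {K<..} w) \<partial>Q x) < ennreal e"
    unfolding eventually_at_top_linorder by blast
  have tail: "(\<integral>\<^sup>+w. ennreal (w * indicator {K<..} w) \<partial>Q x) \<le> ennreal e" for x
    using sup_tail by (meson SUP_upper UNIV_I order.strict_iff_not order_trans)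
  define N1 where "N1 = nat \<lceil>18*K\<^sup>2/(r*\<delta>\<^sup>2)\<rceil> + 1"
  show "eventually (\<lambda>N. (SUP x. emeasure (mean_law (Q x) N) {w. \<delta> \<le> \<bar>w - 1\<bar>}) < ennreal r) sequentially"
  proof (rule eventually_mono[OF eventually_ge_at_top[of N1]])
    fix N assume N: "N1 \<le> N"
    then have "N \<ge> 1" "18*K\<^sup>2/(r*\<delta>\<^sup>2) < N" unfolding N1_def by linarith+
    then have "9*K\<^sup>2/(N*\<delta>\<^sup>2) < r/2" using r \<delta> by (simp add: field_simps)
    then have bound_lt: "9*K\<^sup>2/(N*\<delta>\<^sup>2) + 3*e/\<delta> < r" using e by linarith
    have "(SUP x. emeasure (mean_law (Q x) N) {w. \<delta> \<le> \<bar>w - 1\<bar>}) \<le> ennreal (9*K\<^sup>2/(N*\<delta>\<^sup>2) + 3*e/\<delta>)"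
      using e \<open>N \<ge> 1\<close> by (intro SUP_least mean_law_deviation_le[OF prob sets pos int mean1 \<delta> K _ tail]) auto
    also have "\<dots> < ennreal r" using bound_lt r by (intro ennreal_lessI)
    finally show "(SUP x. emeasure (mean_law (Q x) N) {w. \<delta> \<le> \<bar>w - 1\<bar>}) < ennreal r" .
  qed
qed

lemma dyadic_shell_term_le:
  fixes a p \<beta> M :: real
  assumes a: "0 < a" "a \<le> 1" and p: "0 < p" "p \<le> 1" "p \<le> \<beta>/2" and M: "M \<ge> 0"
  shows "(a/2) powr (-p) * (M * a powr \<beta>) \<le> 2 * M * a powr (\<beta>/2)"
proof -
  have "(a/2) powr (-p) = 2 powr p * a powr (-p)"
    using a by (simp add: powr_divide powr_minus field_simps)
  also have "2 powr p \<le> 2" using powr_mono[of p 1 2] p by simp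
  finally have "(a/2) powr (-p) \<le> 2 * a powr (-p)" by (simp add: mult_right_mono)
  then have "(a/2) powr (-p) * a powr \<beta> \<le> 2 * a powr (-p) * a powr \<beta>"
    by (intro mult_right_mono) auto
  also have "\<dots> \<le> 2 * a powr (\<beta>/2)"
    using a p by (simp add: mult.assoc powr_add[symmetric] powr_mono')
  finally have "M * ((a/2) powr (-p) * a powr \<beta>) \<le> M * (2 * a powr (\<beta>/2))"
    using M by (intro mult_left_mono)
  then show ?thesis by (simp add: algebra_simps)
qed

lemma dyadic_shell_exists:
  fixes w \<epsilon> :: real
  assumes "0 < w" "w \<le> \<epsilon>"
  obtains j where "\<epsilon> * (1/2)^j / 2 < w" "w \<le> \<epsilon> * (1/2)^j"
proof -
  have "\<exists>n. (1/2::real)^n < w/\<epsilon>" using assms by (intro real_arch_pow_inv) auto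
  then have ex: "\<exists>n. \<epsilon> * (1/2)^n < w" using assms by (simp add: field_simps)
  define n where "n = (LEAST n. \<epsilon> * (1/2::real)^n < w)"
  have n: "\<epsilon> * (1/2)^n < w" unfolding n_def by (rule LeastI_ex[OF ex])
  then have "n \<noteq> 0" using assms by (metis mult.right_neutral not_less power_0)
  then obtain j where j: "n = Suc j" by (cases n) auto
  have "w \<le> \<epsilon> * (1/2)^j" using j n_def by (metis lessI not_less_Least not_less)
  moreover have "\<epsilon> * (1/2)^j / 2 < w" using n j by (simp add: mult.assoc)
  ultimately show ?thesis using that by blast
qed

lemma nn_integral_powr_neg_near_zero_le:
  fixes Q :: "real measure" and \<epsilon> p \<beta> M :: real
  assumes sets_Q: "sets Q = sets borel"
    and \<epsilon>: "0 < \<epsilon>" "\<epsilon> \<le> 1" and p: "0 < p" "p \<le> 1" "p \<le> \<beta>/2" and \<beta>: "\<beta> > 0" and M: "M \<ge> 0"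
    and small_ball: "\<And>w. 0 < w \<Longrightarrow> w \<le> \<epsilon> \<Longrightarrow> emeasure Q {..w} \<le> ennreal (M * w powr \<beta>)"
  shows "(\<integral>\<^sup>+w. ennreal (w powr (-p) * indicator {0<..\<epsilon>} w) \<partial>Q)
         \<le> ennreal (2 * M * \<epsilon> powr (\<beta>/2) / (1 - (1/2) powr (\<beta>/2)))"
proof -
  define a where "a j = \<epsilon> * (1/2::real)^j" for j :: nat
  have a: "0 < a j" "a j \<le> \<epsilon>" for j using \<epsilon> by (auto simp: a_def intro!: mult_left_le power_le_one)
  \<comment> \<open>On the dyadic shell \<open>(a j / 2, a j]\<close> the integrand is at most \<open>(a j / 2) powr (-p)\<close>.\<close>
  define T where "T j w = ennreal ((a j / 2) powr (-p)) * indicator {..a j} w" for j w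
  have T_meas: "T j \<in> borel_measurable Q" for j
    unfolding T_def measurable_cong_sets[OF sets_Q refl] by measurable
  have le_sum_T: "ennreal (w powr (-p) * indicator {0<..\<epsilon>} w) \<le> (\<Sum>j. T j w)" for w
  proof (cases "0 < w \<and> w \<le> \<epsilon>")
    case False then show ?thesis by (auto simp: indicator_def)
  next
    case True
    then obtain j where j: "a j / 2 < w" "w \<le> a j"
      using \<epsilon> dyadic_shell_exists[of w \<epsilon>] by (auto simp: a_def)
    then have "w powr (-p) \<le> (a j / 2) powr (-p)"
      using a[of j] p by (intro powr_mono2') auto
    then have "ennreal (w powr (-p) * indicator {0<..\<epsilon>} w) \<le> T j w"
      using True j by (auto simp: T_def indicator_def intro: ennreal_leI)
    also have "T j w \<le> (\<Sum>j. T j w)"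
      using sum_le_suminf[of "\<lambda>j. T j w" "{j}"] by auto
    finally show ?thesis .
  qed
  define r where "r = (1/2::real) powr (\<beta>/2)"
  have r: "0 < r" "r < 1" using \<beta> by (simp_all add: r_def powr01_less_one)
  define c where "c j = 2 * M * \<epsilon> powr (\<beta>/2) * r^j" for j
  have c_sums: "c sums (2 * M * \<epsilon> powr (\<beta>/2) / (1 - r))"
    unfolding c_def using sums_mult[OF geometric_sums[of r], of "2 * M * \<epsilon> powr (\<beta>/2)"] r
    by (simp add: field_simps)
  have a_powr: "a j powr (\<beta>/2) = \<epsilon> powr (\<beta>/2) * r^j" for j
    using \<epsilon> by (simp add: a_def r_def powr_mult powr_realpow[symmetric] powr_powr mult.commute)
  have "(\<integral>\<^sup>+w. ennreal (w powr (-p) * indicator {0<..\<epsilon>} w) \<partial>Q) \<le> (\<integral>\<^sup>+w. (\<Sum>j. T j w) \<partial>Q)"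
    by (intro nn_integral_mono le_sum_T)
  also have "\<dots> = (\<Sum>j. \<integral>\<^sup>+w. T j w \<partial>Q)" by (rule nn_integral_suminf[OF T_meas])
  also have "\<dots> = (\<Sum>j. ennreal ((a j / 2) powr (-p)) * emeasure Q {..a j})"
    unfolding T_def by (subst nn_integral_cmult_indicator) (auto simp: sets_Q)
  also have "\<dots> \<le> (\<Sum>j. ennreal (c j))"
  proof (intro suminf_le allI)
    fix j
    have "ennreal ((a j / 2) powr (-p)) * emeasure Q {..a j} \<le> ennreal ((a j / 2) powr (-p)) * ennreal (M * a j powr \<beta>)"
      using small_ball[OF a] by (intro mult_left_mono) auto
    also have "\<dots> = ennreal ((a j / 2) powr (-p) * (M * a j powr \<beta>))" using M by (simp add: ennreal_mult)
    also have "\<dots> \<le> ennreal (c j)"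
      using dyadic_shell_term_le[of "a j" p \<beta> M] a[of j] \<epsilon> p M
      by (intro ennreal_leI) (simp add: c_def a_powr)
    finally show "ennreal ((a j / 2) powr (-p)) * emeasure Q {..a j} \<le> ennreal (c j)" .
  qed auto
  also have "\<dots> = ennreal (2 * M * \<epsilon> powr (\<beta>/2) / (1 - r))"
    using c_sums M r by (subst suminf_ennreal2) (auto simp: c_def sums_iff)
  finally show ?thesis by (simp add: r_def)
qed

text \<open>The weight of an exponentially tilted Chernoff bound for the event \<open>sample_mean N \<omega> < w0\<close>.
  Its value \<open>\<infinity>\<close> at \<open>w \<le> 0\<close> makes the product bound below hold without any positivity hypothesis.\<close>

definition chernoff_weight :: "real \<Rightarrow> real \<Rightarrow> real \<Rightarrow> real \<Rightarrow> ennreal" where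
  "chernoff_weight p t w0 w = (if 0 < w then ennreal (w powr (-p)) else \<top>) * ennreal (exp (t * (w0 - w)))"

lemma borel_measurable_chernoff_weight: "chernoff_weight p t w0 \<in> borel_measurable borel"
  unfolding chernoff_weight_def by measurable

lemma chernoff_weight_neq_zero: "chernoff_weight p t w0 w \<noteq> 0"
  by (simp add: chernoff_weight_def powr_def)

lemma chernoff_weight_pos:
  "0 < w \<Longrightarrow> chernoff_weight p t w0 w = ennreal (w powr (-p) * exp (t * (w0 - w)))"
  by (simp add: chernoff_weight_def ennreal_mult)

lemma nn_integral_chernoff_weight_le:
  fixes Q :: "real measure" and p t w0 \<epsilon> A :: real
  assumes Q: "prob_space Q" and sets_Q: "sets Q = sets borel" and pos: "AE w in Q. 0 < w"
    and p: "p > 0" and t: "t > 0" and \<epsilon>: "0 < \<epsilon>" and A: "A \<ge> 0"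
    and near_zero: "(\<integral>\<^sup>+w. ennreal (w powr (-p) * indicator {0<..\<epsilon>} w) \<partial>Q) \<le> ennreal A"
  shows "(\<integral>\<^sup>+w. chernoff_weight p t w0 w \<partial>Q) \<le> ennreal (exp (t*w0) * (A + \<epsilon> powr (-p) * exp (-t*\<epsilon>)))"
proof -
  interpret prob_space Q by fact
  define d where "d = \<epsilon> powr (-p) * exp (-t*\<epsilon>)"
  define g where "g w = w powr (-p) * indicator {0<..\<epsilon>} w" for w :: real
  have d: "d \<ge> 0" and g: "g w \<ge> 0" for w by (simp_all add: d_def g_def)
  have weight_le: "w powr (-p) * exp (t * (w0 - w)) \<le> exp (t*w0) * (g w + d)" if w: "0 < w" for w
  proof (cases "w \<le> \<epsilon>")
    case True
    have "exp (t * (w0 - w)) \<le> exp (t*w0)" using t w by (simp add: algebra_simps)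
    then have "w powr (-p) * exp (t * (w0 - w)) \<le> w powr (-p) * exp (t*w0)"
      by (intro mult_left_mono) auto
    also have "\<dots> \<le> exp (t*w0) * (g w + d)" using True w d by (simp add: g_def algebra_simps)
    finally show ?thesis .
  next
    case False
    have "w powr (-p) \<le> \<epsilon> powr (-p)" using False \<epsilon> p by (intro powr_mono2') auto
    moreover have "exp (t * (w0 - w)) \<le> exp (t*w0) * exp (-t*\<epsilon>)"
      using False t by (simp add: exp_add[symmetric] algebra_simps)
    ultimately have "w powr (-p) * exp (t * (w0 - w)) \<le> \<epsilon> powr (-p) * (exp (t*w0) * exp (-t*\<epsilon>))"
      by (intro mult_mono) auto
    also have "\<dots> = exp (t*w0) * (g w + d)" using False by (simp add: g_def d_def)
    finally show ?thesis .
  qed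
  have g_meas: "(\<lambda>w. ennreal (g w)) \<in> borel_measurable Q"
    unfolding measurable_cong_sets[OF sets_Q refl] g_def by measurable
  have "(\<integral>\<^sup>+w. chernoff_weight p t w0 w \<partial>Q) \<le> (\<integral>\<^sup>+w. ennreal (exp (t*w0)) * (ennreal (g w) + ennreal d) \<partial>Q)"
    using pos weight_le g d
    by (intro nn_integral_mono_AE) (auto elim!: eventually_mono intro!: ennreal_leI
        simp: chernoff_weight_pos ennreal_mult[symmetric] ennreal_plus[symmetric] simp del: ennreal_plus)
  also have "\<dots> = ennreal (exp (t*w0)) * ((\<integral>\<^sup>+w. ennreal (g w) \<partial>Q) + ennreal d)"
    using g_meas by (simp add: nn_integral_cmult nn_integral_add emeasure_space_1)
  also have "\<dots> \<le> ennreal (exp (t*w0)) * (ennreal A + ennreal d)"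
    using near_zero by (intro mult_left_mono add_right_mono) (auto simp: g_def)
  also have "\<dots> = ennreal (exp (t*w0) * (A + d))" using A d by (simp add: ennreal_mult ennreal_plus)
  finally show ?thesis by (simp add: d_def)
qed

lemma inverse_mean_le_prod_powr:
  fixes x :: "'i \<Rightarrow> real"
  assumes "finite I" "I \<noteq> {}" "\<And>i. i \<in> I \<Longrightarrow> 0 < x i"
  shows "1 / ((\<Sum>i\<in>I. x i) / card I) \<le> (\<Prod>i\<in>I. x i powr (- (1 / card I)))"
proof -
  have prod_pos: "0 < (\<Prod>i\<in>I. x i) powr (1 / card I)" using assms by (simp add: prod_pos less_imp_neq[symmetric])
  have "(\<Prod>i\<in>I. x i) powr (1 / card I) \<le> (\<Sum>i\<in>I. x i) / card I"
    using assms by (simp add: arith_geom_mean less_imp_le sum_divide_distrib)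
  then have "1 / ((\<Sum>i\<in>I. x i) / card I) \<le> 1 / (\<Prod>i\<in>I. x i) powr (1 / card I)"
    using prod_pos assms by (intro divide_left_mono mult_pos_pos divide_pos_pos sum_pos) auto
  also have "\<dots> = (\<Prod>i\<in>I. x i) powr (- (1 / card I))"
    by (simp add: powr_minus_divide)
  also have "\<dots> = (\<Prod>i\<in>I. x i powr (- (1 / card I)))"
    by (rule prod_powr_distrib)
  finally show ?thesis .
qed

text \<open>AM-GM bounds \<open>1 / sample_mean\<close> by a product, and on \<open>sample_mean < w0\<close> the tilting factors
  multiply to at least \<open>1\<close>.\<close>

lemma inverse_sample_mean_le_prod_chernoff_weight:
  fixes \<omega> :: "nat \<Rightarrow> real" and N :: nat and t w0 :: real
  assumes N: "N \<ge> 1" and t: "t \<ge> 0"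
  shows "ennreal (1 / sample_mean N \<omega>) * indicator {..<w0} (sample_mean N \<omega>)
         \<le> (\<Prod>k\<in>{1..N}. chernoff_weight (1/N) t w0 (\<omega> k))"
proof (cases "\<exists>k\<in>{1..N}. \<omega> k \<le> 0")
  case True
  then obtain k where k: "k \<in> {1..N}" "\<omega> k \<le> 0" by auto
  then have "chernoff_weight (1/N) t w0 (\<omega> k) = \<top>" by (simp add: chernoff_weight_def ennreal_mult_top)
  then have "(\<Prod>k\<in>{1..N}. chernoff_weight (1/N) t w0 (\<omega> k)) = \<top>"
    using k chernoff_weight_neq_zero by (subst ennreal_prod_eq_top) auto
  then show ?thesis by simp
next
  case False
  then have pos: "\<And>k. k \<in> {1..N} \<Longrightarrow> 0 < \<omega> k" using not_le by blast
  show ?thesis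
  proof (cases "sample_mean N \<omega> < w0")
    case False then show ?thesis by (simp add: indicator_def)
  next
    case True
    have "(\<Sum>k\<in>{1..N}. t * (w0 - \<omega> k)) = t * N * (w0 - sample_mean N \<omega>)"
      using N by (simp add: sample_mean_def sum_distrib_left[symmetric] sum_subtractf algebra_simps)
    then have tilt: "1 \<le> (\<Prod>k\<in>{1..N}. exp (t * (w0 - \<omega> k)))"
      using True t by (simp add: exp_sum[symmetric])
    have "1 / sample_mean N \<omega> \<le> (\<Prod>k\<in>{1..N}. \<omega> k powr (- (1 / N)))"
      using inverse_mean_le_prod_powr[of "{1..N}" \<omega>] N pos by (simp add: sample_mean_def)
    also have "\<dots> \<le> (\<Prod>k\<in>{1..N}. \<omega> k powr (- (1 / N))) * (\<Prod>k\<in>{1..N}. exp (t * (w0 - \<omega> k)))"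
      using mult_left_mono[OF tilt, of "\<Prod>k\<in>{1..N}. \<omega> k powr (- (1 / N))"] by (simp add: prod_nonneg)
    also have "\<dots> = (\<Prod>k\<in>{1..N}. \<omega> k powr (- (1 / N)) * exp (t * (w0 - \<omega> k)))"
      by (simp add: prod.distrib)
    finally show ?thesis
      using True pos by (simp add: indicator_def chernoff_weight_pos prod_ennreal ennreal_leI)
  qed
qed

lemma inverse_le_split:
  fixes w w0 \<delta> :: real
  assumes \<delta>: "\<delta> < 1" and w0: "0 < w0" "w0 \<le> 1 - \<delta>"
  shows "ennreal (1/w) \<le> ennreal (1/(1-\<delta>))
    + (ennreal (1/w0) * indicator {w. \<delta> \<le> \<bar>w - 1\<bar>} w + ennreal (1/w) * indicator {..<w0} w)"
proof -
  consider "w < w0" | "w0 \<le> w" "w < 1 - \<delta>" | "1 - \<delta> \<le> w" by linarith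
  then show ?thesis
  proof cases
    case 2
    then have "\<delta> \<le> \<bar>w - 1\<bar>" "1/w \<le> 1/w0" using w0 by (auto intro: divide_left_mono)
    then have "ennreal (1/w) \<le> ennreal (1/w0) * indicator {w. \<delta> \<le> \<bar>w - 1\<bar>} w" by (simp add: ennreal_leI)
    then show ?thesis by (intro add_increasing add_increasing2) auto
  next
    case 3
    then have "1/w \<le> 1/(1-\<delta>)" using \<delta> by (intro divide_left_mono) auto
    then show ?thesis by (intro add_increasing2 ennreal_leI) auto
  qed (simp add: indicator_def)
qed

lemma nn_integral_inverse_mean_law_le:
  fixes Q :: "real measure" and N :: nat and \<delta> w0 t :: real
  assumes Q: "prob_space Q" and sets_Q: "sets Q = sets borel" and N: "N \<ge> 1"
    and \<delta>: "0 < \<delta>" "\<delta> < 1" and w0: "0 < w0" "w0 \<le> 1 - \<delta>" and t: "t \<ge> 0"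
  shows "(\<integral>\<^sup>+w. ennreal (1/w) \<partial>mean_law Q N)
     \<le> ennreal (1/(1-\<delta>)) + ennreal (1/w0) * emeasure (mean_law Q N) {w. \<delta> \<le> \<bar>w - 1\<bar>}
        + (\<integral>\<^sup>+w. chernoff_weight (1/N) t w0 w \<partial>Q) ^ N"
proof -
  define P where "P = PiM {1..N} (\<lambda>_::nat. Q)"
  define L where "L = mean_law Q N"
  define A where "A = {w::real. \<delta> \<le> \<bar>w - 1\<bar>}"
  have L_eq: "L = distr P borel (sample_mean N)" unfolding L_def P_def by (rule mean_law_eq_distr)
  interpret L: prob_space L unfolding L_def by (rule prob_space_mean_law[OF Q sets_Q])
  have borel_L: "borel_measurable L = borel_measurable borel"
    by (rule measurable_cong_sets) (simp_all add: L_def)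
  have A: "A \<in> sets L" unfolding A_def L_def by simp
  have meas: "(\<lambda>w. ennreal (1/w0) * indicator A w) \<in> borel_measurable L"
    "(\<lambda>w. ennreal (1/w) * indicator {..<w0} w) \<in> borel_measurable L"
    unfolding borel_L A_def by measurable
  have "(\<integral>\<^sup>+w. ennreal (1/w) \<partial>L) \<le> (\<integral>\<^sup>+w. ennreal (1/(1-\<delta>))
      + (ennreal (1/w0) * indicator A w + ennreal (1/w) * indicator {..<w0} w) \<partial>L)"
    unfolding A_def using \<delta> w0 by (intro nn_integral_mono inverse_le_split)
  also have "\<dots> = ennreal (1/(1-\<delta>)) + ((\<integral>\<^sup>+w. ennreal (1/w0) * indicator A w \<partial>L)
      + (\<integral>\<^sup>+w. ennreal (1/w) * indicator {..<w0} w \<partial>L))"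
    using meas by (simp add: nn_integral_add L.emeasure_space_1)
  also have "(\<integral>\<^sup>+w. ennreal (1/w0) * indicator A w \<partial>L) = ennreal (1/w0) * emeasure L A"
    using A by (rule nn_integral_cmult_indicator)
  also have "(\<integral>\<^sup>+w. ennreal (1/w) * indicator {..<w0} w \<partial>L)
      = (\<integral>\<^sup>+\<omega>. ennreal (1 / sample_mean N \<omega>) * indicator {..<w0} (sample_mean N \<omega>) \<partial>P)"
    unfolding L_eq using measurable_sample_mean[OF sets_Q] by (subst nn_integral_distr) (auto simp: P_def)
  also have "\<dots> \<le> (\<integral>\<^sup>+\<omega>. (\<Prod>k\<in>{1..N}. chernoff_weight (1/N) t w0 (\<omega> k)) \<partial>P)"
    by (intro nn_integral_mono inverse_sample_mean_le_prod_chernoff_weight N t)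
  also have "\<dots> = (\<integral>\<^sup>+w. chernoff_weight (1/N) t w0 w \<partial>Q) ^ N"
    using Q unfolding P_def
    by (subst nn_integral_iid_prod) (auto simp: prob_space_imp_sigma_finite measurable_cong_sets[OF sets_Q refl]
        borel_measurable_chernoff_weight)
  finally show ?thesis unfolding L_def A_def by (simp add: add.assoc)
qed

lemma nn_integral_inverse_mean_law_ge:
  fixes Q :: "real measure" and N :: nat and \<delta> :: real
  assumes Q: "prob_space Q" and sets_Q: "sets Q = sets borel" and \<delta>: "0 < \<delta>" "\<delta> < 1"
  shows "ennreal (1/(1+\<delta>)) * (1 - emeasure (mean_law Q N) {w. \<delta> \<le> \<bar>w - 1\<bar>})
    \<le> (\<integral>\<^sup>+w. ennreal (1/w) \<partial>mean_law Q N)"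
proof -
  define L where "L = mean_law Q N"
  define A where "A = {w::real. \<delta> \<le> \<bar>w - 1\<bar>}"
  interpret L: prob_space L unfolding L_def by (rule prob_space_mean_law[OF Q sets_Q])
  have A: "A \<in> sets L" unfolding A_def L_def by simp
  have "ennreal (1/(1+\<delta>)) * (1 - emeasure L A) = (\<integral>\<^sup>+w. ennreal (1/(1+\<delta>)) * indicator (space L - A) w \<partial>L)"
    using A by (simp add: nn_integral_cmult_indicator emeasure_compl L.emeasure_space_1)
  also have "\<dots> \<le> (\<integral>\<^sup>+w. ennreal (1/w) \<partial>L)"
  proof (intro nn_integral_mono)
    fix w
    have "1/(1+\<delta>) \<le> 1/w" if "w \<notin> A" using that \<delta> by (intro divide_left_mono) (auto simp: A_def)
    then show "ennreal (1/(1+\<delta>)) * indicator (space L - A) w \<le> ennreal (1/w)"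
      by (simp add: indicator_def ennreal_leI)
  qed
  finally show ?thesis unfolding L_def A_def .
qed

lemma exists_radius_powr_le:
  fixes \<beta> \<gamma> C c :: real
  assumes \<beta>: "\<beta> > 0" and \<gamma>: "0 < \<gamma>" and C: "C \<ge> 0" and c: "0 < c" "c \<le> 1"
  obtains \<epsilon> where "0 < \<epsilon>" "\<epsilon> < \<gamma>" "\<epsilon> \<le> 1" "C * \<epsilon> powr (\<beta>/2) \<le> c"
proof
  define \<epsilon> where "\<epsilon> = min (\<gamma>/2) ((c / (C + 1)) powr (2/\<beta>))"
  have "(c / (C + 1)) powr (2/\<beta>) \<le> 1" using C \<beta> c by (intro powr_le1) auto
  then show "0 < \<epsilon>" "\<epsilon> < \<gamma>" "\<epsilon> \<le> 1" using \<gamma> C c by (auto simp: \<epsilon>_def min_le_iff_disj)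
  have "\<epsilon> powr (\<beta>/2) \<le> ((c / (C + 1)) powr (2/\<beta>)) powr (\<beta>/2)"
    using \<gamma> \<beta> C c by (intro powr_mono2) (auto simp: \<epsilon>_def)
  also have "\<dots> = c / (C + 1)" using \<beta> C c by (simp add: powr_powr)
  finally have "C * \<epsilon> powr (\<beta>/2) \<le> C * (c / (C + 1))" using C by (intro mult_left_mono)
  also have "\<dots> \<le> c" using C c by (simp add: field_simps)
  finally show "C * \<epsilon> powr (\<beta>/2) \<le> c" .
qed

lemma uniform_chernoff_weight_bound:
  fixes \<beta> \<gamma> M :: real
  assumes \<beta>: "\<beta> > 0" and \<gamma>: "0 < \<gamma>" and M: "M \<ge> 0"
  obtains t w0 :: real and N0 :: nat where "t > 0" "0 < w0" "w0 \<le> 1/2" "N0 \<ge> 1"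
    "\<And>Q N. prob_space Q \<Longrightarrow> sets Q = sets borel \<Longrightarrow> AE w in Q. 0 < w
      \<Longrightarrow> (\<And>w. 0 < w \<Longrightarrow> w < \<gamma> \<Longrightarrow> emeasure Q {..w} \<le> ennreal (M * w powr \<beta>))
      \<Longrightarrow> N0 \<le> N \<Longrightarrow> (\<integral>\<^sup>+w. chernoff_weight (1 / real N) t w0 w \<partial>Q) \<le> ennreal (1/2)"
proof -
  define r where "r = (1/2::real) powr (\<beta>/2)"
  have r: "0 < r" "r < 1" using \<beta> by (simp_all add: r_def powr01_less_one)
  obtain \<epsilon> where \<epsilon>: "0 < \<epsilon>" "\<epsilon> < \<gamma>" "\<epsilon> \<le> 1" and A_le: "2 * M * \<epsilon> powr (\<beta>/2) / (1 - r) \<le> 1/8"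
    using exists_radius_powr_le[OF \<beta> \<gamma>, of "2 * M / (1 - r)" "1/8"] M r by auto
  \<comment> \<open>\<open>t\<close> makes \<open>exp (-t*\<epsilon>) = 1/16\<close>, \<open>w0\<close> keeps \<open>exp (t*w0) \<le> 2\<close>, and \<open>N \<ge> N0\<close> gives
    \<open>\<epsilon> powr (-1/N) \<le> 2\<close> and \<open>1/N \<le> \<beta>/2\<close>; the bound is then \<open>2 * (1/8 + 2 * 1/16) = 1/2\<close>.\<close>
  define t where "t = ln 16 / \<epsilon>"
  define w0 where "w0 = min (1/2) (ln 2 / t)"
  define N0 where "N0 = nat \<lceil>ln (1/\<epsilon>) / ln 2 + 2/\<beta>\<rceil> + 1"
  have t: "t > 0" and tail: "exp (-t*\<epsilon>) = 1/16" using \<epsilon> by (simp_all add: t_def exp_minus)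
  have w0: "0 < w0" "w0 \<le> 1/2" unfolding w0_def using t by simp (rule min.cobounded1)
  have "t * w0 \<le> ln 2" using t by (simp add: w0_def field_simps min_def)
  then have tilt: "exp (t*w0) \<le> 2" by (metis exp_le_cancel_iff exp_ln zero_less_numeral)
  show ?thesis
  proof (rule that[OF t w0])
    show "N0 \<ge> 1" by (simp add: N0_def)
    fix Q :: "real measure" and N :: nat
    assume Q: "prob_space Q" "sets Q = sets borel" "AE w in Q. 0 < w"
      and small_ball: "\<And>w. 0 < w \<Longrightarrow> w < \<gamma> \<Longrightarrow> emeasure Q {..w} \<le> ennreal (M * w powr \<beta>)"
      and N: "N0 \<le> N"
    define p where "p = 1 / real N"
    have ln_\<epsilon>: "ln (1/\<epsilon>) \<ge> 0" using \<epsilon> by simp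
    have N_large: "ln (1/\<epsilon>) / ln 2 < N" "2/\<beta> < N"
      using N ln_\<epsilon> \<beta> unfolding N0_def by (smt (verit) divide_nonneg_nonneg ln_ge_zero of_nat_ceiling
          of_nat_le_iff of_nat_add of_nat_1)+
    have "N \<ge> 1" using N by (simp add: N0_def)
    then have p: "0 < p" "p \<le> 1" "p \<le> \<beta>/2" using \<beta> N_large(2) by (auto simp: p_def field_simps)
    have "p * ln (1/\<epsilon>) \<le> ln 2" using N_large(1) p by (simp add: p_def field_simps)
    then have "\<epsilon> powr (-p) \<le> 2"
      using \<epsilon> by (simp add: powr_def ln_div) (metis exp_le_cancel_iff exp_ln zero_less_numeral)
    have "(\<integral>\<^sup>+w. ennreal (w powr (-p) * indicator {0<..\<epsilon>} w) \<partial>Q) \<le> ennreal (2 * M * \<epsilon> powr (\<beta>/2) / (1 - r))"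
      unfolding r_def using \<epsilon> p \<beta> M small_ball
      by (intro nn_integral_powr_neg_near_zero_le[OF Q(2)]) auto
    then have "(\<integral>\<^sup>+w. chernoff_weight p t w0 w \<partial>Q)
      \<le> ennreal (exp (t*w0) * (2 * M * \<epsilon> powr (\<beta>/2) / (1 - r) + \<epsilon> powr (-p) * exp (-t*\<epsilon>)))"
      using M r by (intro nn_integral_chernoff_weight_le[OF Q p(1) t \<epsilon>(1)]) auto
    also have "\<dots> \<le> ennreal (2 * (1/8 + 2 * (1/16)))"
      using tilt A_le \<open>\<epsilon> powr (-p) \<le> 2\<close> M r unfolding tail
      by (intro ennreal_leI mult_mono add_mono) auto
    finally show "(\<integral>\<^sup>+w. chernoff_weight (1 / real N) t w0 w \<partial>Q) \<le> ennreal (1/2)" by (simp add: p_def)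
  qed
qed

lemma eventually_gt_by_deviation_lower_bound:
  fixes g :: "nat \<Rightarrow> ennreal" and P :: "real \<Rightarrow> nat \<Rightarrow> ennreal" and a :: ennreal
  assumes P: "\<And>\<delta>. 0 < \<delta> \<Longrightarrow> P \<delta> \<longlonglongrightarrow> 0"
    and lower: "\<And>\<delta> N. 0 < \<delta> \<Longrightarrow> \<delta> < 1 \<Longrightarrow> ennreal (1/(1+\<delta>)) * (1 - P \<delta> N) \<le> g N"
    and "a < 1"
  shows "eventually (\<lambda>N. a < g N) sequentially"
proof -
  from \<open>a < 1\<close> obtain ra where ra: "a = ennreal ra" "0 \<le> ra" "ra < 1"
    by (cases a) (auto simp: ennreal_less_iff simp flip: ennreal_1)
  define \<eta> where "\<eta> = (1 - ra) / 4"
  have \<eta>: "0 < \<eta>" "\<eta> < 1" using ra by (auto simp: \<eta>_def)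
  have "0 < (1 - ra) * (3 - ra)" using ra by (intro mult_pos_pos) auto
  then have "ra < (1 - \<eta>) / (1 + \<eta>)" using ra \<eta> by (simp add: \<eta>_def field_simps)
  then have "a < ennreal ((1 - \<eta>) / (1 + \<eta>))" using ra by (simp add: ennreal_lessI)
  also have "\<dots> = ennreal (1/(1+\<eta>)) * (1 - ennreal \<eta>)"
    using \<eta> by (simp add: ennreal_mult[symmetric] ennreal_1[symmetric] ennreal_minus del: ennreal_1)
  finally have a_less: "a < ennreal (1/(1+\<eta>)) * (1 - ennreal \<eta>)" .
  show "eventually (\<lambda>N. a < g N) sequentially"
  proof (rule eventually_mono[OF order_tendstoD(2)[OF P[OF \<eta>(1)], of "ennreal \<eta>"]])
    fix N assume "P \<eta> N < ennreal \<eta>"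
    then have "ennreal (1/(1+\<eta>)) * (1 - ennreal \<eta>) \<le> ennreal (1/(1+\<eta>)) * (1 - P \<eta> N)"
      by (intro mult_left_mono ennreal_minus_mono) auto
    also have "\<dots> \<le> g N" using lower \<eta> by simp
    finally show "a < g N" using a_less by simp
  qed (use \<eta> in simp)
qed

lemma eventually_lt_by_deviation_upper_bound:
  fixes g :: "nat \<Rightarrow> ennreal" and P :: "real \<Rightarrow> nat \<Rightarrow> ennreal" and r :: "nat \<Rightarrow> real" and C :: real
  assumes P: "\<And>\<delta>. 0 < \<delta> \<Longrightarrow> P \<delta> \<longlonglongrightarrow> 0" and r: "r \<longlonglongrightarrow> 0" and C: "C > 0"
    and upper: "\<And>\<delta> N. 0 < \<delta> \<Longrightarrow> \<delta> \<le> 1/2 \<Longrightarrow> N0 \<le> N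
      \<Longrightarrow> g N \<le> ennreal (1/(1-\<delta>)) + ennreal C * P \<delta> N + ennreal (r N)"
    and "1 < a"
  shows "eventually (\<lambda>N. g N < a) sequentially"
proof -
  from \<open>1 < a\<close> obtain b where b: "1 < b" "b < a" using dense by blast
  then obtain rb where rb: "b = ennreal rb" "1 < rb"
    by (cases b) (auto simp: ennreal_less_iff simp flip: ennreal_1)
  define s where "s = (1 + rb) / 2"
  define \<delta> where "\<delta> = min (1/2) (1 - 1/s)"
  define \<eta> where "\<eta> = (rb - s) / 3"
  have s: "1 < s" "s < rb" and \<eta>: "\<eta> > 0" using rb by (auto simp: s_def \<eta>_def)
  have \<delta>: "0 < \<delta>" "\<delta> \<le> 1/2" using s by (auto simp: \<delta>_def field_simps)
  have "1/s \<le> 1 - \<delta>" by (simp add: \<delta>_def)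
  then have \<delta>_s: "1/(1-\<delta>) \<le> s" using s \<delta> by (simp add: field_simps)
  have "eventually (\<lambda>N. P \<delta> N < ennreal (\<eta> / C) \<and> r N < \<eta> \<and> N0 \<le> N) sequentially"
    using \<eta> C by (intro eventually_conj order_tendstoD(2)[OF P[OF \<delta>(1)]] order_tendstoD(2)[OF r]
        eventually_ge_at_top) auto
  then show "eventually (\<lambda>N. g N < a) sequentially"
  proof (rule eventually_mono)
    fix N assume N: "P \<delta> N < ennreal (\<eta> / C) \<and> r N < \<eta> \<and> N0 \<le> N"
    have "g N \<le> ennreal (1/(1-\<delta>)) + ennreal C * P \<delta> N + ennreal (r N)"
      using N \<delta> by (intro upper) auto
    also have "\<dots> \<le> ennreal s + ennreal C * ennreal (\<eta> / C) + ennreal \<eta>"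
      using N \<delta>_s by (intro add_mono mult_left_mono ennreal_leI) auto
    also have "\<dots> = ennreal (s + 2 * \<eta>)"
      using C \<eta> s by (simp add: ennreal_mult[symmetric] ennreal_plus[symmetric] del: ennreal_plus)
    also have "\<dots> < ennreal rb" using s rb by (intro ennreal_lessI) (auto simp: \<eta>_def field_simps)
    finally show "g N < a" using b rb by simp
  qed
qed

lemma tendsto_one_by_deviation_bounds:
  fixes g :: "nat \<Rightarrow> ennreal" and P :: "real \<Rightarrow> nat \<Rightarrow> ennreal" and r :: "nat \<Rightarrow> real" and C :: real
  assumes P: "\<And>\<delta>. 0 < \<delta> \<Longrightarrow> P \<delta> \<longlonglongrightarrow> 0" and r: "r \<longlonglongrightarrow> 0" and C: "C > 0"
    and upper: "\<And>\<delta> N. 0 < \<delta> \<Longrightarrow> \<delta> \<le> 1/2 \<Longrightarrow> N0 \<le> N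
      \<Longrightarrow> g N \<le> ennreal (1/(1-\<delta>)) + ennreal C * P \<delta> N + ennreal (r N)"
    and lower: "\<And>\<delta> N. 0 < \<delta> \<Longrightarrow> \<delta> < 1 \<Longrightarrow> ennreal (1/(1+\<delta>)) * (1 - P \<delta> N) \<le> g N"
  shows "g \<longlonglongrightarrow> 1"
  using eventually_gt_by_deviation_lower_bound[OF P lower]
    eventually_lt_by_deviation_upper_bound[OF P r C upper]
  by (rule order_tendstoI)

lemma SUP_nn_integral_inverse_mean_law_le:
  fixes Q :: "'x \<Rightarrow> real measure" and N :: nat and \<delta> w0 t :: real
  assumes prob: "\<And>x. prob_space (Q x)" and sets: "\<And>x. sets (Q x) = sets borel" and N: "N \<ge> 1"
    and \<delta>: "0 < \<delta>" "\<delta> < 1" and w0: "0 < w0" "w0 \<le> 1 - \<delta>" and t: "t \<ge> 0"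
    and chernoff: "\<And>x. (\<integral>\<^sup>+w. chernoff_weight (1/N) t w0 w \<partial>Q x) \<le> ennreal (1/2)"
  shows "(SUP x. \<integral>\<^sup>+w. ennreal (1/w) \<partial>mean_law (Q x) N)
    \<le> ennreal (1/(1-\<delta>)) + ennreal (1/w0) * (SUP x. emeasure (mean_law (Q x) N) {w. \<delta> \<le> \<bar>w - 1\<bar>})
      + ennreal ((1/2)^N)"
proof (rule SUP_least)
  fix x
  have "(\<integral>\<^sup>+w. chernoff_weight (1/N) t w0 w \<partial>Q x) ^ N \<le> ennreal (1/2) ^ N"
    using chernoff by (rule power_mono) simp
  also have "\<dots> = ennreal ((1/2)^N)" by (rule ennreal_power) simp
  finally have chernoff_power: "(\<integral>\<^sup>+w. chernoff_weight (1/N) t w0 w \<partial>Q x) ^ N \<le> ennreal ((1/2)^N)" .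
  have "(\<integral>\<^sup>+w. ennreal (1/w) \<partial>mean_law (Q x) N)
      \<le> ennreal (1/(1-\<delta>)) + ennreal (1/w0) * emeasure (mean_law (Q x) N) {w. \<delta> \<le> \<bar>w - 1\<bar>}
        + (\<integral>\<^sup>+w. chernoff_weight (1/N) t w0 w \<partial>Q x) ^ N"
    by (rule nn_integral_inverse_mean_law_le[OF prob sets N \<delta> w0 t])
  also have "\<dots> \<le> ennreal (1/(1-\<delta>)) + ennreal (1/w0) * (SUP x. emeasure (mean_law (Q x) N) {w. \<delta> \<le> \<bar>w - 1\<bar>})
        + ennreal ((1/2)^N)"
    using chernoff_power by (intro add_mono mult_left_mono order_refl SUP_upper) auto
  finally show "(\<integral>\<^sup>+w. ennreal (1/w) \<partial>mean_law (Q x) N) \<le> \<dots>" .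
qed

lemma SUP_nn_integral_inverse_mean_law_ge:
  fixes Q :: "'x \<Rightarrow> real measure" and N :: nat and \<delta> :: real
  assumes prob: "\<And>x. prob_space (Q x)" and sets: "\<And>x. sets (Q x) = sets borel" and \<delta>: "0 < \<delta>" "\<delta> < 1"
  shows "ennreal (1/(1+\<delta>)) * (1 - (SUP x. emeasure (mean_law (Q x) N) {w. \<delta> \<le> \<bar>w - 1\<bar>}))
    \<le> (SUP x. \<integral>\<^sup>+w. ennreal (1/w) \<partial>mean_law (Q x) N)"
proof -
  have "ennreal (1/(1+\<delta>)) * (1 - (SUP x. emeasure (mean_law (Q x) N) {w. \<delta> \<le> \<bar>w - 1\<bar>}))
      \<le> ennreal (1/(1+\<delta>)) * (1 - emeasure (mean_law (Q x) N) {w. \<delta> \<le> \<bar>w - 1\<bar>})" for x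
    by (intro mult_left_mono ennreal_minus_mono SUP_upper) auto
  also have "\<dots> x \<le> (\<integral>\<^sup>+w. ennreal (1/w) \<partial>mean_law (Q x) N)" for x
    by (rule nn_integral_inverse_mean_law_ge[OF prob sets \<delta>])
  also have "\<dots> x \<le> (SUP x. \<integral>\<^sup>+w. ennreal (1/w) \<partial>mean_law (Q x) N)" for x by (rule SUP_upper) simp
  finally show ?thesis .
qed

lemma W1_W4_imp_W2:
  fixes Q :: "'x \<Rightarrow> real measure"
  assumes prob: "\<And>x. prob_space (Q x)" and sets: "\<And>x. sets (Q x) = sets borel"
    and pos: "\<And>x. AE w in Q x. 0 < w" and W1: "W1 Q" and W4: "W4 Q"
  shows "W2 Q"
proof -
  obtain \<gamma> M0 \<beta> :: real where \<gamma>: "0 < \<gamma>" and \<beta>: "\<beta> > 0"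
    and sup_small_ball: "\<And>w. 0 < w \<Longrightarrow> w < \<gamma> \<Longrightarrow> (SUP x. emeasure (Q x) {..w}) \<le> ennreal (M0 * w powr \<beta>)"
    using W4 unfolding W4_def by blast
  define M where "M = max M0 0"
  have small_ball: "emeasure (Q x) {..w} \<le> ennreal (M * w powr \<beta>)" if "0 < w" "w < \<gamma>" for x w
  proof -
    have "emeasure (Q x) {..w} \<le> ennreal (M0 * w powr \<beta>)"
      using sup_small_ball[OF that] by (meson SUP_upper UNIV_I order_trans)
    also have "\<dots> \<le> ennreal (M * w powr \<beta>)" by (intro ennreal_leI mult_right_mono) (auto simp: M_def)
    finally show ?thesis .
  qed
  obtain t w0 :: real and N0 :: nat where t: "t > 0" and w0: "0 < w0" "w0 \<le> 1/2" and N0: "N0 \<ge> 1"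
    and chernoff: "\<And>x N. N0 \<le> N \<Longrightarrow> (\<integral>\<^sup>+w. chernoff_weight (1 / real N) t w0 w \<partial>Q x) \<le> ennreal (1/2)"
    using uniform_chernoff_weight_bound[OF \<beta> \<gamma>, of M] prob sets pos small_ball by (metis M_def max.cobounded2)
  show ?thesis
    unfolding W2_def
  proof (rule tendsto_one_by_deviation_bounds[where r = "\<lambda>N. (1/2)^N" and C = "1/w0"])
    show "(\<lambda>N. SUP x. emeasure (mean_law (Q x) N) {w. \<delta> \<le> \<bar>w - 1\<bar>}) \<longlonglongrightarrow> 0" if "0 < \<delta>" for \<delta>
      using W1 that unfolding W1_def by simp
    show "(\<lambda>N. (1/2::real)^N) \<longlonglongrightarrow> 0" by (rule LIMSEQ_realpow_zero) auto
    show "0 < 1/w0" using w0 by simp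
  next
    fix \<delta> :: real and N :: nat
    assume "0 < \<delta>" "\<delta> \<le> 1/2" "N0 \<le> N"
    with N0 t w0 chernoff show "(SUP x. \<integral>\<^sup>+w. ennreal (1/w) \<partial>mean_law (Q x) N)
      \<le> ennreal (1/(1-\<delta>)) + ennreal (1/w0) * (SUP x. emeasure (mean_law (Q x) N) {w. \<delta> \<le> \<bar>w - 1\<bar>})
        + ennreal ((1/2)^N)"
      by (intro SUP_nn_integral_inverse_mean_law_le[OF prob sets, where t = t]) auto
  qed (rule SUP_nn_integral_inverse_mean_law_ge[OF prob sets])
qed

theorem proposition3p10:
  fixes Q :: "'x \<Rightarrow> real measure"
  assumes prob: "\<And>x. prob_space (Q x)"
    and sets: "\<And>x. sets (Q x) = sets borel"
    and pos: "\<And>x. AE w in Q x. 0 < w"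
    and int: "\<And>x. integrable (Q x) (\<lambda>w. w)"
    and mean1: "\<And>x. (\<integral>w. w \<partial>Q x) = 1"
  shows "(W3 Q \<longrightarrow> W1 Q) \<and> (W1 Q \<and> W4 Q \<longrightarrow> W2 Q)"
  using W3_imp_W1[of Q, OF prob sets pos int mean1] W1_W4_imp_W2[of Q, OF prob sets pos] by blast

end
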